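(* Let $(G,k)$ be an instance, $S\subseteq V$, and let $V_{\mathrm{tree}}$ be the union of the vertex sets of those connected components of $G-S$ that are trees. If $v\in S$ is large-dense and $|N(v)\cap V_{\mathrm{tree}}|\ge 2k+4$, then every feasible solution contains $v$; consequently $(G,k)$ is a yes-instance iff $(G-v,k-1)$ is.
   Context: Graphs are undirected, without self-loops, possibly with multi-edges. $N(v)$ is the set of vertices adjacent to $v$; $\rho(v)$ is the number of unordered pairs $\{u_1,u_2\}\subseteq N(v)$ joined by at least one edge. A vertex $v$ is large-dense if $|N(v)|>7k$ and $\rho(v)> |N(v)|(|N(v)|-1)/4$. A vertex set induces a clique if between any two distinct vertices there is exactly one edge, and a tree if it is connected and acyclic (two parallel edges form a cycle). A feasible solution is $X\subseteq V$, $|X|\le k$, with every component of $G-X$ a clique or a tree. *)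

theory Defs
  imports Complex_Main
begin

text \<open>A multigraph is given by a vertex set V and an edge-multiplicity function
  m :: 'a => 'a => nat (m u w = number of edges between u and w).\<close>

definition multigraph :: "'a set \<Rightarrow> ('a \<Rightarrow> 'a \<Rightarrow> nat) \<Rightarrow> bool" where
  "multigraph V m \<longleftrightarrow> finite V \<and> (\<forall>u w. m u w = m w u) \<and> (\<forall>u. m u u = 0)
     \<and> (\<forall>u w. 0 < m u w \<longrightarrow> u \<in> V \<and> w \<in> V)"

definition nbhd :: "'a set \<Rightarrow> ('a \<Rightarrow> 'a \<Rightarrow> nat) \<Rightarrow> 'a \<Rightarrow> 'a set" where
  "nbhd W m v = {u \<in> W. 0 < m v u}"

definition rho :: "'a set \<Rightarrow> ('a \<Rightarrow> 'a \<Rightarrow> nat) \<Rightarrow> 'a \<Rightarrow> nat" where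
  "rho W m v = card {{u1, u2} | u1 u2. u1 \<in> nbhd W m v \<and> u2 \<in> nbhd W m v \<and> u1 \<noteq> u2 \<and> 0 < m u1 u2}"

definition large_dense :: "'a set \<Rightarrow> ('a \<Rightarrow> 'a \<Rightarrow> nat) \<Rightarrow> nat \<Rightarrow> 'a \<Rightarrow> bool" where
  "large_dense W m k v \<longleftrightarrow> card (nbhd W m v) > 7 * k \<and>
     real (rho W m v) > real (card (nbhd W m v)) * (real (card (nbhd W m v)) - 1) / 4"

definition reach :: "'a set \<Rightarrow> ('a \<Rightarrow> 'a \<Rightarrow> nat) \<Rightarrow> 'a \<Rightarrow> 'a \<Rightarrow> bool" where
  "reach W m = (\<lambda>a b. a \<in> W \<and> b \<in> W \<and> 0 < m a b)\<^sup>*\<^sup>*"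

definition components :: "'a set \<Rightarrow> ('a \<Rightarrow> 'a \<Rightarrow> nat) \<Rightarrow> 'a set set" where
  "components W m = {C. \<exists>x \<in> W. C = {y \<in> W. reach W m x y}}"

definition induces_clique :: "'a set \<Rightarrow> ('a \<Rightarrow> 'a \<Rightarrow> nat) \<Rightarrow> bool" where
  "induces_clique C m \<longleftrightarrow> (\<forall>u \<in> C. \<forall>w \<in> C. u \<noteq> w \<longrightarrow> m u w = 1)"

definition connected_set :: "'a set \<Rightarrow> ('a \<Rightarrow> 'a \<Rightarrow> nat) \<Rightarrow> bool" where
  "connected_set C m \<longleftrightarrow> C \<noteq> {} \<and> (\<forall>u \<in> C. \<forall>w \<in> C. reach C m u w)"

definition has_cycle :: "'a set \<Rightarrow> ('a \<Rightarrow> 'a \<Rightarrow> nat) \<Rightarrow> bool" where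
  "has_cycle C m \<longleftrightarrow> (\<exists>u \<in> C. \<exists>w \<in> C. 2 \<le> m u w) \<or>
     (\<exists>cs. 3 \<le> length cs \<and> distinct cs \<and> set cs \<subseteq> C \<and>
        (\<forall>i < length cs. 0 < m (cs ! i) (cs ! ((i + 1) mod length cs))))"

definition induces_tree :: "'a set \<Rightarrow> ('a \<Rightarrow> 'a \<Rightarrow> nat) \<Rightarrow> bool" where
  "induces_tree C m \<longleftrightarrow> connected_set C m \<and> \<not> has_cycle C m"

definition feasible :: "'a set \<Rightarrow> ('a \<Rightarrow> 'a \<Rightarrow> nat) \<Rightarrow> int \<Rightarrow> 'a set \<Rightarrow> bool" where
  "feasible V m k X \<longleftrightarrow> X \<subseteq> V \<and> int (card X) \<le> k \<and>
     (\<forall>C \<in> components (V - X) m. induces_clique C m \<or> induces_tree C m)"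

definition yes_instance :: "'a set \<Rightarrow> ('a \<Rightarrow> 'a \<Rightarrow> nat) \<Rightarrow> int \<Rightarrow> bool" where
  "yes_instance V m k \<longleftrightarrow> (\<exists>X. feasible V m k X)"

definition del_vertex :: "('a \<Rightarrow> 'a \<Rightarrow> nat) \<Rightarrow> 'a \<Rightarrow> 'a \<Rightarrow> 'a \<Rightarrow> nat" where
  "del_vertex m v = (\<lambda>a b. if a = v \<or> b = v then 0 else m a b)"

definition V_tree :: "'a set \<Rightarrow> ('a \<Rightarrow> 'a \<Rightarrow> nat) \<Rightarrow> 'a set \<Rightarrow> 'a set" where
  "V_tree V m S = \<Union> {C \<in> components (V - S) m. induces_tree C m}"

end

theory Submission
  imports Defs
begin

text \<open>Suppose a solution X avoids v. Then v lies in a component of G - X that is a clique or a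
  tree. A clique component contains at most two vertices of tree components of G - S (three
  would form a triangle inside such a tree), which is incompatible with v having 2k + 4 neighbours
  in those trees of which only k are deleted. In a tree component no two neighbours of v are
  adjacent, so every edge counted by rho(v) meets X, whence rho(v) \<le> k |N(v)|; this contradicts
  density because |N(v)| > 7k. Once v is forced into every solution, deleting it is safe.\<close>

lemma reach_cong:
  assumes "\<forall>a\<in>W. \<forall>b\<in>W. m a b = m' a b"
  shows "reach W m = reach W m'"
proof -
  have "(\<lambda>a b. a \<in> W \<and> b \<in> W \<and> 0 < m a b) = (\<lambda>a b. a \<in> W \<and> b \<in> W \<and> 0 < m' a b)"
    using assms by (auto intro!: ext)
  then show ?thesis unfolding reach_def by simp
qed

lemma components_cong:
  assumes "\<forall>a\<in>W. \<forall>b\<in>W. m a b = m' a b"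
  shows "components W m = components W m'"
  unfolding components_def using reach_cong[OF assms] by simp

lemma has_cycle_cong:
  assumes "\<forall>a\<in>C. \<forall>b\<in>C. m a b = m' a b"
  shows "has_cycle C m = has_cycle C m'"
proof -
  have edge: "m (cs ! i) (cs ! ((i + 1) mod length cs)) = m' (cs ! i) (cs ! ((i + 1) mod length cs))"
    if "set cs \<subseteq> C" "i < length cs" for cs i
  proof -
    have "(i + 1) mod length cs < length cs" using that(2) by (intro mod_less_divisor) linarith
    then show ?thesis using that assms nth_mem by (metis subsetD)
  qed
  show ?thesis unfolding has_cycle_def
    by (intro arg_cong2[where f = "(\<or>)"] ex_cong1) (use assms edge in auto)
qed

lemma induces_tree_cong:
  assumes "\<forall>a\<in>C. \<forall>b\<in>C. m a b = m' a b"
  shows "induces_tree C m = induces_tree C m'"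
  unfolding induces_tree_def connected_set_def
  using has_cycle_cong[OF assms] reach_cong[OF assms] by simp

lemma induces_clique_cong:
  assumes "\<forall>a\<in>C. \<forall>b\<in>C. m a b = m' a b"
  shows "induces_clique C m = induces_clique C m'"
  unfolding induces_clique_def using assms by auto

lemma components_subset: "C \<in> components W m \<Longrightarrow> C \<subseteq> W"
  unfolding components_def by auto

lemma components_del_vertex:
  assumes "v \<notin> W"
  shows "(\<forall>C \<in> components W m. induces_clique C m \<or> induces_tree C m) \<longleftrightarrow>
    (\<forall>C \<in> components W (del_vertex m v).
       induces_clique C (del_vertex m v) \<or> induces_tree C (del_vertex m v))"
proof -
  have agree: "\<forall>a\<in>W. \<forall>b\<in>W. m a b = del_vertex m v a b"
    using assms unfolding del_vertex_def by auto
  then have "\<forall>a\<in>C. \<forall>b\<in>C. m a b = del_vertex m v a b" if "C \<in> components W m" for C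
    using components_subset[OF that] by blast
  then show ?thesis
    using components_cong[OF agree] induces_clique_cong induces_tree_cong by metis
qed

lemma feasible_insert_iff_del_vertex:
  assumes "finite V" "v \<in> V" "v \<notin> Y"
  shows "feasible V m k (insert v Y) \<longleftrightarrow> feasible (V - {v}) (del_vertex m v) (k - 1) Y"
proof (cases "Y \<subseteq> V")
  case True
  then have "card (insert v Y) = card Y + 1"
    using assms finite_subset by fastforce
  moreover have "V - insert v Y = V - {v} - Y" by auto
  ultimately show ?thesis
    unfolding feasible_def using True assms components_del_vertex[of v "V - {v} - Y" m]
    by auto
next
  case False
  then show ?thesis unfolding feasible_def by auto
qed

lemma reach_adjacent: "a \<in> W \<Longrightarrow> b \<in> W \<Longrightarrow> 0 < m a b \<Longrightarrow> reach W m a b"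
  unfolding reach_def by auto

lemma components_adjacent_mem:
  assumes "D \<in> components W m" "a \<in> D" "b \<in> W" "0 < m a b"
  shows "b \<in> D"
proof -
  obtain x where "x \<in> W" and D: "D = {y \<in> W. reach W m x y}"
    using assms(1) unfolding components_def by auto
  then have "reach W m x a" "a \<in> W" using assms(2) by auto
  then have "reach W m x b"
    using reach_adjacent[of a W b m] assms(3,4) unfolding reach_def by auto
  then show ?thesis using D assms(3) by auto
qed

lemma has_cycle_triangle:
  assumes "a \<in> C" "b \<in> C" "c \<in> C" "a \<noteq> b" "b \<noteq> c" "a \<noteq> c"
    and "0 < m a b" "0 < m b c" "0 < m c a"
  shows "has_cycle C m"
  unfolding has_cycle_def
proof (intro disjI2 exI[of _ "[a, b, c]"] conjI allI impI)
  fix i assume "i < length [a, b, c]"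
  then have "i = 0 \<or> i = 1 \<or> i = 2" by auto
  then show "0 < m ([a, b, c] ! i) ([a, b, c] ! ((i + 1) mod length [a, b, c]))"
    using assms by auto
qed (use assms in auto)

lemma induces_tree_nbrs_nonadjacent:
  assumes "multigraph V m" "induces_tree C m" "v \<in> C" "u1 \<in> C" "u2 \<in> C" "u1 \<noteq> u2"
    and "0 < m v u1" "0 < m v u2"
  shows "m u1 u2 = 0"
proof (rule ccontr)
  have "m v v = 0" "m u2 v = m v u2" using assms(1) unfolding multigraph_def by auto
  then have "v \<noteq> u1" "v \<noteq> u2" using assms(7,8) by auto
  moreover assume "m u1 u2 \<noteq> 0"
  ultimately have "has_cycle C m"
    using has_cycle_triangle[of v C u1 u2] assms \<open>m u2 v = m v u2\<close> by auto
  then show False using assms(2) unfolding induces_tree_def by simp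
qed

lemma induces_clique_card_V_tree_le:
  assumes "induces_clique C m"
  shows "card (C \<inter> V_tree V m S) \<le> 2"
proof (rule ccontr)
  assume "\<not> ?thesis"
  then obtain T where "T \<subseteq> C \<inter> V_tree V m S" "card T = 3"
    using obtain_subset_with_card_n[of 3 "C \<inter> V_tree V m S"] by force
  then obtain a b c where distinct: "a \<noteq> b" "b \<noteq> c" "a \<noteq> c"
    and in_C: "a \<in> C" "b \<in> C" "c \<in> C"
    and in_trees: "a \<in> V_tree V m S" "b \<in> V_tree V m S" "c \<in> V_tree V m S"
    unfolding card_3_iff by auto
  obtain D where D: "D \<in> components (V - S) m" "induces_tree D m" "a \<in> D"
    using in_trees(1) unfolding V_tree_def by auto
  have edges: "m a b = 1" "m b c = 1" "m c a = 1" "m a c = 1"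
    using assms distinct in_C unfolding induces_clique_def by auto
  have "b \<in> V - S" "c \<in> V - S"
    using in_trees components_subset unfolding V_tree_def by blast+
  then have "b \<in> D" "c \<in> D"
    using components_adjacent_mem[OF D(1,3)] edges by auto
  then have "has_cycle D m"
    using has_cycle_triangle[of a D b c m] D(3) distinct edges by auto
  then show False using D(2) unfolding induces_tree_def by simp
qed

lemma rho_le_of_cover:
  assumes "finite W" "finite X"
    and cover: "\<And>u1 u2. u1 \<in> nbhd W m v \<Longrightarrow> u2 \<in> nbhd W m v \<Longrightarrow> u1 \<noteq> u2 \<Longrightarrow> 0 < m u1 u2
      \<Longrightarrow> u1 \<in> X \<or> u2 \<in> X"
  shows "rho W m v \<le> card X * card (nbhd W m v)"
proof -
  define N where "N = nbhd W m v"
  have "finite N" unfolding N_def nbhd_def using assms(1) by auto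
  have "{{u1, u2} | u1 u2. u1 \<in> N \<and> u2 \<in> N \<and> u1 \<noteq> u2 \<and> 0 < m u1 u2}
    \<subseteq> (\<lambda>(x, u). {x, u}) ` (X \<times> N)"
    using cover unfolding N_def by (fastforce simp: insert_commute)
  then have "rho W m v \<le> card ((\<lambda>(x, u). {x, u}) ` (X \<times> N))"
    unfolding rho_def N_def[symmetric]
    using \<open>finite N\<close> assms(2) by (intro card_mono) auto
  also have "\<dots> \<le> card (X \<times> N)" using \<open>finite N\<close> assms(2) by (intro card_image_le) auto
  finally show ?thesis by (simp add: card_cartesian_product N_def)
qed

lemma large_dense_rho_gt:
  assumes "large_dense W m k v"
  shows "k * card (nbhd W m v) < rho W m v"
proof -
  define d where "d = card (nbhd W m v)"
  have "d > 7 * k" and rho: "real (rho W m v) > real d * (real d - 1) / 4"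
    using assms unfolding large_dense_def d_def by auto
  then have "4 * real k \<le> real d - 1" by linarith
  then have "real d * (4 * real k) \<le> real d * (real d - 1)" by (intro mult_left_mono) auto
  then have "real (k * d) < real (rho W m v)" using rho by (simp add: mult.commute)
  then show ?thesis unfolding d_def by linarith
qed

lemma feasible_contains_large_dense:
  assumes mg: "multigraph V m" and "v \<in> V"
    and dense: "large_dense V m k v"
    and tree_nbrs: "card (nbhd V m v \<inter> V_tree V m S) \<ge> 2 * k + 4"
    and X: "feasible V m (int k) X"
  shows "v \<in> X"
proof (rule ccontr)
  assume "v \<notin> X"
  have "finite V" using mg unfolding multigraph_def by simp
  have "X \<subseteq> V" "card X \<le> k" using X unfolding feasible_def by auto
  then have "finite X" using \<open>finite V\<close> finite_subset by blast
  define N where "N = nbhd V m v"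
  define C where "C = {y \<in> V - X. reach (V - X) m v y}"
  have "C \<in> components (V - X) m" "v \<in> C"
    unfolding C_def components_def reach_def using \<open>v \<in> V\<close> \<open>v \<notin> X\<close> by auto
  have N_C: "N - X \<subseteq> C"
    using components_adjacent_mem[OF \<open>C \<in> _\<close> \<open>v \<in> C\<close>] unfolding N_def nbhd_def by auto
  have "induces_clique C m \<or> induces_tree C m"
    using X \<open>C \<in> _\<close> unfolding feasible_def by auto
  then show False
  proof
    assume "induces_clique C m"
    have "N \<inter> V_tree V m S \<subseteq> (C \<inter> V_tree V m S) \<union> X" using N_C by auto
    then have "card (N \<inter> V_tree V m S) \<le> card (C \<inter> V_tree V m S) + card X"
      using \<open>finite V\<close> \<open>finite X\<close> components_subset[OF \<open>C \<in> _\<close>]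
      by (meson card_Un_le card_mono finite_Int finite_UnI finite_subset Diff_subset le_trans)
    then show False
      using induces_clique_card_V_tree_le[OF \<open>induces_clique C m\<close>, of V S]
        \<open>card X \<le> k\<close> tree_nbrs unfolding N_def by linarith
  next
    assume "induces_tree C m"
    have "u1 \<in> X \<or> u2 \<in> X"
      if "u1 \<in> N" "u2 \<in> N" "u1 \<noteq> u2" "0 < m u1 u2" for u1 u2
      using induces_tree_nbrs_nonadjacent[OF mg \<open>induces_tree C m\<close> \<open>v \<in> C\<close>, of u1 u2]
        that N_C unfolding N_def nbhd_def by auto
    then have "rho V m v \<le> card X * card N"
      using rho_le_of_cover[OF \<open>finite V\<close> \<open>finite X\<close>] unfolding N_def by blast
    also have "\<dots> \<le> k * card N" using \<open>card X \<le> k\<close> by simp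
    finally show False using large_dense_rho_gt[OF dense] unfolding N_def by simp
  qed
qed

theorem mainTheorem16:
  fixes V :: "'a set" and m :: "'a \<Rightarrow> 'a \<Rightarrow> nat" and k :: nat and S :: "'a set" and v :: 'a
  assumes "multigraph V m"
    and "S \<subseteq> V"
    and "v \<in> S"
    and "large_dense V m k v"
    and "card (nbhd V m v \<inter> V_tree V m S) \<ge> 2 * k + 4"
  shows "(\<forall>X. feasible V m (int k) X \<longrightarrow> v \<in> X)
    \<and> (yes_instance V m (int k) \<longleftrightarrow> yes_instance (V - {v}) (del_vertex m v) (int k - 1))"
proof -
  have "finite V" "v \<in> V" using assms(1-3) unfolding multigraph_def by auto
  have forced: "\<forall>X. feasible V m (int k) X \<longrightarrow> v \<in> X"
    using feasible_contains_large_dense[OF assms(1) \<open>v \<in> V\<close> assms(4,5)] by blast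
  note reduce = feasible_insert_iff_del_vertex[OF \<open>finite V\<close> \<open>v \<in> V\<close>]
  have "yes_instance V m (int k) \<longleftrightarrow> yes_instance (V - {v}) (del_vertex m v) (int k - 1)"
  proof
    assume "yes_instance V m (int k)"
    then obtain X where "feasible V m (int k) X" unfolding yes_instance_def by auto
    moreover have "insert v (X - {v}) = X" using forced calculation by auto
    ultimately show "yes_instance (V - {v}) (del_vertex m v) (int k - 1)"
      using reduce[of "X - {v}"] unfolding yes_instance_def by auto
  next
    assume "yes_instance (V - {v}) (del_vertex m v) (int k - 1)"
    then obtain Y where Y: "feasible (V - {v}) (del_vertex m v) (int k - 1) Y"
      unfolding yes_instance_def by auto
    then have "v \<notin> Y" unfolding feasible_def by auto
    then show "yes_instance V m (int k)"
      using reduce Y unfolding yes_instance_def by blast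
  qed
  with forced show ?thesis by blast
qed

end
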